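(* For $n\ge1$ and $0\le i\le\lfloor n/2\rfloor$, $b(n,i,i)=\dfrac{n!}{i!(n-2i)!2^i}$.
   Context: The integers $b(n,i,j)$ ($n\ge1$) are defined by $b(1,0,0)=1$, $b(1,i,j)=0$ for $(i,j)\ne(0,0)$, $b(n,i,j)=0$ if $i<0$ or $j<0$, and $b(n+1,i,j)=b(n,i,j)+2i\,b(n,i,j-1)+(n-2i+2)\,b(n,i-1,j-1)$. (Equivalently, $b(n,i,j)$ is the number of $\pi\in\mathfrak{S}_n$ with $i$ cycle peaks — indices $m$ with $\pi^{-1}(m)<m>\pi(m)$ — and $n-j$ cycles.) *)

theory Defs
  imports Complex_Main
begin

text \<open>b n i j for n \<ge> 1 with integer indices i, j (zero when i < 0 or j < 0).
  The value at n = 0 is irrelevant and set to 0.\<close>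
fun b :: "nat \<Rightarrow> int \<Rightarrow> int \<Rightarrow> int" where
  "b 0 i j = 0"
| "b (Suc 0) i j = (if i = 0 \<and> j = 0 then 1 else 0)"
| "b (Suc (Suc n)) i j =
     (if i < 0 \<or> j < 0 then 0 else
        b (Suc n) i j + 2 * i * b (Suc n) i (j - 1)
        + (int (Suc n) - 2 * i + 2) * b (Suc n) (i - 1) (j - 1))"

end

theory Submission
  imports Defs
begin

text \<open>Since b vanishes below the diagonal, on the diagonal the recurrence collapses to
  b(n+1,i+1,i+1) = b(n,i+1,i+1) + (n-2i) b(n,i,i). The same recurrence holds for
  n!/(i!(n-2i)!2^i), the number of involutions of an n-set with i transpositions: the new point
  is either fixed, or paired with one of the n-2i points fixed by an involution with i
  transpositions. Both start from 1 at n = 1, so they agree.\<close>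

definition involution_count :: "nat \<Rightarrow> nat \<Rightarrow> real" where
  "involution_count n i = (if 2 * i \<le> n then fact n / (fact i * fact (n - 2 * i) * 2 ^ i) else 0)"

lemma involution_count_0_right [simp]: "involution_count n 0 = 1"
  by (simp add: involution_count_def)

lemma involution_count_Suc_Suc:
  "involution_count (Suc n) (Suc k) =
     involution_count n (Suc k) + (real n - 2 * real k) * involution_count n k"
proof -
  consider "2 * k + 2 \<le> n" | "n = 2 * k + 1" | "n \<le> 2 * k"
    by linarith
  then show ?thesis
  proof cases
    case 1
    define d where "d = n - 2 * k - 2"
    have n: "real n = real d + 2 * real k + 2"
      using 1 by (simp add: d_def)
    have "fact (Suc n) / (fact (Suc k) * fact (Suc d) * 2 ^ Suc k)
        = fact n / (fact (Suc k) * fact d * 2 ^ Suc k)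
          + (real d + 2) * (fact n / (fact k * fact (Suc (Suc d)) * 2 ^ k))"
      unfolding fact_Suc[of n] fact_Suc[of k] fact_Suc[of d] fact_Suc[of "Suc d"]
      by (simp add: divide_simps del: of_nat_Suc) (simp add: n algebra_simps)
    moreover have "Suc n - 2 * Suc k = Suc d" "n - 2 * Suc k = d" "n - 2 * k = Suc (Suc d)"
      using 1 by (simp_all add: d_def)
    ultimately show ?thesis
      using 1 n by (simp add: involution_count_def)
  next
    case 2
    have "fact (Suc n) / (fact (Suc k) * 2 ^ Suc k) = (fact n / (fact k * 2 ^ k) :: real)"
      unfolding fact_Suc[of n] fact_Suc[of k]
      by (simp add: 2 divide_simps del: of_nat_Suc) (simp add: algebra_simps)
    with 2 show ?thesis
      by (simp add: involution_count_def)
  next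
    case 3
    then show ?thesis
      by (auto simp: involution_count_def)
  qed
qed

lemma b_neg_left: "i < 0 \<Longrightarrow> b n i j = 0"
  by (cases "(n, i, j)" rule: b.cases) auto

lemma b_below_diagonal: "j < i \<Longrightarrow> b n i j = 0"
  by (induction n i j rule: b.induct) auto

lemma b_diagonal_Suc:
  assumes "n \<ge> 1" and "i \<ge> 0"
  shows "b (Suc n) i i = b n i i + (int n - 2 * i + 2) * b n (i - 1) (i - 1)"
proof -
  obtain m where "n = Suc m"
    using assms(1) by (cases n) auto
  then show ?thesis
    using assms(2) b_below_diagonal[of "i - 1" i] by simp
qed

lemma b_diagonal_eq_involution_count:
  "n \<ge> 1 \<Longrightarrow> real_of_int (b n (int i) (int i)) = involution_count n i"
proof (induction n arbitrary: i rule: nat_induct_at_least)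
  case base
  then show ?case
    by (cases i) (auto simp: involution_count_def)
next
  case (Suc n)
  show ?case
  proof (cases i)
    case 0
    then show ?thesis
      using \<open>n \<ge> 1\<close> Suc.IH[of 0] b_diagonal_Suc[of n 0] b_neg_left[of "-1" n "-1"] by simp
  next
    case (Suc k)
    have "b (Suc n) i i = b n i i + (int n - 2 * int k) * b n k k"
      using \<open>n \<ge> 1\<close> b_diagonal_Suc[of n "int i"] Suc by simp
    then have "real_of_int (b (Suc n) i i) =
        involution_count n i + (real n - 2 * real k) * involution_count n k"
      by (simp add: Suc.IH)
    then show ?thesis
      using Suc involution_count_Suc_Suc by simp
  qed
qed

theorem corollary6:
  fixes n i :: nat
  assumes "n \<ge> 1" and "i \<le> n div 2"
  shows "real_of_int (b n (int i) (int i)) = fact n / (fact i * fact (n - 2 * i) * 2 ^ i)"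
  using b_diagonal_eq_involution_count[OF assms(1)] assms(2)
  by (simp add: involution_count_def)

end
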